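(* Consider the four-oscillator system below with $A=-1$ (so $K_\mathrm{s}=0$, $K_\mathrm{n}=1$) and $\alpha_\mathrm{s}=\alpha_\mathrm{n}=0$. Then the function $$H^{(-1,0)}(\psi_1,\psi_3)=\cot\!\left(\frac{\psi_1+\psi_3}{4}\right)\tan\!\left(\frac{\psi_1-\psi_3}{4}\right)$$ (with $\psi_1,\psi_3$ the real-valued phase differences of a solution) is constant along every solution on any time interval on which it is defined (i.e. on which $(\psi_1+\psi_3)/4\notin\pi\mathbb{Z}$ and $(\psi_1-\psi_3)/4\notin \pi/2+\pi\mathbb{Z}$).
   Context: Network of $M=2$ populations of $N=2$ phase oscillators with phases $\theta_{\sigma,k}(t)\in\mathbb{R}$ (population $\sigma\in\{1,2\}$, oscillator $k\in\{1,2\}$), evolving by $$\dot\theta_{\sigma,k}=\omega+\frac{K_\mathrm{s}}{4}\sum_{j=1}^{2}\sin(\theta_{\sigma,j}-\theta_{\sigma,k}-\alpha_\mathrm{s})+\frac{K_\mathrm{n}}{4}\sum_{j=1}^{2}\sin(\theta_{\tau,j}-\theta_{\sigma,k}-\alpha_\mathrm{n}),$$ where $\tau$ denotes the population other than $\sigma$, $\omega\in\mathbb{R}$, $\alpha_\mathrm{s},\alpha_\mathrm{n}\in\mathbb{R}$ are phase lags, and the coupling strengths are parametrized by $A\in\mathbb{R}$ via $K_\mathrm{s}=(1+A)/2$, $K_\mathrm{n}=(1-A)/2$ (so $K_\mathrm{s}+K_\mathrm{n}=1$, $A=K_\mathrm{s}-K_\mathrm{n}$). The phase differences are $\psi_1=\theta_{1,1}-\theta_{1,2}$,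 $\psi_2=\theta_{1,2}-\theta_{2,1}$, $\psi_3=\theta_{2,1}-\theta_{2,2}$; they satisfy an autonomous ODE (the reduced system) since the right-hand side depends only on phase differences. *)

theory Defs
  imports "HOL-Analysis.Analysis"
begin

(* Phases: theta sigma k t = theta_{sigma,k}(t), sigma, k in {1,2}. *)

definition other_pop :: "nat \<Rightarrow> nat" where
  "other_pop \<sigma> = (if \<sigma> = 1 then 2 else 1)"

definition Ks :: "real \<Rightarrow> real" where "Ks A = (1 + A) / 2"
definition Kn :: "real \<Rightarrow> real" where "Kn A = (1 - A) / 2"

definition osc_rhs ::
  "real \<Rightarrow> real \<Rightarrow> real \<Rightarrow> real \<Rightarrow> (nat \<Rightarrow> nat \<Rightarrow> real \<Rightarrow> real) \<Rightarrow> nat \<Rightarrow> nat \<Rightarrow> real \<Rightarrow> real" where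
  "osc_rhs \<omega> A \<alpha>s \<alpha>n \<theta> \<sigma> k t =
     \<omega> + Ks A / 4 * (\<Sum>j\<in>{1,2::nat}. sin (\<theta> \<sigma> j t - \<theta> \<sigma> k t - \<alpha>s))
       + Kn A / 4 * (\<Sum>j\<in>{1,2::nat}. sin (\<theta> (other_pop \<sigma>) j t - \<theta> \<sigma> k t - \<alpha>n))"

definition is_solution ::
  "real \<Rightarrow> real \<Rightarrow> real \<Rightarrow> real \<Rightarrow> (nat \<Rightarrow> nat \<Rightarrow> real \<Rightarrow> real) \<Rightarrow> real set \<Rightarrow> bool" where
  "is_solution \<omega> A \<alpha>s \<alpha>n \<theta> I \<longleftrightarrow>
     (\<forall>t\<in>I. \<forall>\<sigma>\<in>{1,2}. \<forall>k\<in>{1,2}.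
        ((\<lambda>s. \<theta> \<sigma> k s) has_real_derivative osc_rhs \<omega> A \<alpha>s \<alpha>n \<theta> \<sigma> k t) (at t))"

definition psi1 :: "(nat \<Rightarrow> nat \<Rightarrow> real \<Rightarrow> real) \<Rightarrow> real \<Rightarrow> real" where
  "psi1 \<theta> t = \<theta> 1 1 t - \<theta> 1 2 t"
definition psi3 :: "(nat \<Rightarrow> nat \<Rightarrow> real \<Rightarrow> real) \<Rightarrow> real \<Rightarrow> real" where
  "psi3 \<theta> t = \<theta> 2 1 t - \<theta> 2 2 t"

definition H_m1_0 :: "real \<Rightarrow> real \<Rightarrow> real" where
  "H_m1_0 p1 p3 = cot ((p1 + p3) / 4) * tan ((p1 - p3) / 4)"

definition H_defined :: "real \<Rightarrow> real \<Rightarrow> bool" where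
  "H_defined p1 p3 \<longleftrightarrow>
     (\<forall>m::int. (p1 + p3) / 4 \<noteq> of_int m * pi) \<and>
     (\<forall>m::int. (p1 - p3) / 4 \<noteq> pi / 2 + of_int m * pi)"

end

theory Submission
  imports Defs
begin

text \<open>
  With \<open>A = -1\<close> every oscillator is driven only by the other population.  Writing
  \<open>u = (\<psi>\<^sub>1 + \<psi>\<^sub>3)/4\<close> and \<open>v = (\<psi>\<^sub>1 - \<psi>\<^sub>3)/4\<close>, the reduced dynamics satisfies
  \<open>sin (2u) v' = sin (2v) u'\<close>, a consequence of the sum-to-product formulas.  Since
  \<open>(cot u tan v)' = (sin (2u) v' - sin (2v) u') / (2 sin\<^sup>2 u cos\<^sup>2 v)\<close>, the function
  \<open>H = cot u tan v\<close> has vanishing derivative, hence is constant on every interval.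
\<close>

lemma has_real_derivative_cot_mult_tan:
  fixes u v :: "real \<Rightarrow> real"
  assumes "(u has_real_derivative u') (at t)" and "(v has_real_derivative v') (at t)"
    and "sin (u t) \<noteq> 0" and "cos (v t) \<noteq> 0"
  shows "((\<lambda>s. cot (u s) * tan (v s)) has_real_derivative
           (sin (2 * u t) * v' - sin (2 * v t) * u') / (2 * (sin (u t) * cos (v t))\<^sup>2)) (at t)"
proof -
  have "cot (u s) * tan (v s) = cos (u s) * sin (v s) / (sin (u s) * cos (v s))" for s
    by (simp add: cot_def tan_def)
  moreover have "((\<lambda>s. cos (u s) * sin (v s) / (sin (u s) * cos (v s))) has_real_derivative
           (sin (2 * u t) * v' - sin (2 * v t) * u') / (2 * (sin (u t) * cos (v t))\<^sup>2)) (at t)"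
    apply (rule derivative_eq_intros assms refl)+
    using assms(3,4) apply simp
    using assms(3,4) apply (simp add: sin_double divide_simps)
    using sin_cos_squared_add[of "u t"] sin_cos_squared_add[of "v t"] by algebra
  ultimately show ?thesis
    by simp
qed

lemma sin_neighbour_coupling_identity:
  fixes a b c d :: real
  shows "sin ((a - b + c - d) / 2) *
           ((sin (c - a) + sin (d - a)) - (sin (c - b) + sin (d - b))
             - (sin (a - c) + sin (b - c)) + (sin (a - d) + sin (b - d)))
       = sin ((a - b - c + d) / 2) *
           ((sin (c - a) + sin (d - a)) - (sin (c - b) + sin (d - b))
             + (sin (a - c) + sin (b - c)) - (sin (a - d) + sin (b - d)))"
proof -
  \<comment> \<open>In the half in-population differences and the half offset between the populations
    every angle is a signed sum of \<open>\<alpha>, \<beta>, \<gamma>\<close>, and expanding turns the claim into a polynomial identity.\<close>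
  define \<alpha> where "\<alpha> = (a - b) / 2"
  define \<beta> where "\<beta> = (c - d) / 2"
  define \<gamma> where "\<gamma> = (a + b - c - d) / 2"
  have substitution: "(a - b + c - d) / 2 = \<alpha> + \<beta>" "(a - b - c + d) / 2 = \<alpha> - \<beta>"
    "c - a = \<beta> - \<alpha> - \<gamma>" "d - a = - \<beta> - \<alpha> - \<gamma>" "c - b = \<beta> + \<alpha> - \<gamma>" "d - b = - \<beta> + \<alpha> - \<gamma>"
    "a - c = \<alpha> - \<beta> + \<gamma>" "b - c = - \<alpha> - \<beta> + \<gamma>" "a - d = \<alpha> + \<beta> + \<gamma>" "b - d = - \<alpha> + \<beta> + \<gamma>"
    by (simp_all add: \<alpha>_def \<beta>_def \<gamma>_def field_simps)
  show ?thesis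
    unfolding substitution by (simp add: sin_add sin_diff cos_add cos_diff algebra_simps)
qed

lemma osc_rhs_neighbour_only:
  "osc_rhs \<omega> (-1) \<alpha>s \<alpha>n \<theta> \<sigma> k t =
     \<omega> + (sin (\<theta> (other_pop \<sigma>) 1 t - \<theta> \<sigma> k t - \<alpha>n)
          + sin (\<theta> (other_pop \<sigma>) 2 t - \<theta> \<sigma> k t - \<alpha>n)) / 4"
  by (simp add: osc_rhs_def Ks_def Kn_def)

lemma reduced_dynamics_half_angle_relation:
  assumes "is_solution \<omega> (-1) 0 0 \<theta> I" and "t \<in> I"
  obtains u' v'
  where "((\<lambda>s. (psi1 \<theta> s + psi3 \<theta> s) / 4) has_real_derivative u') (at t)"
    and "((\<lambda>s. (psi1 \<theta> s - psi3 \<theta> s) / 4) has_real_derivative v') (at t)"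
    and "sin ((psi1 \<theta> t + psi3 \<theta> t) / 2) * v' = sin ((psi1 \<theta> t - psi3 \<theta> t) / 2) * u'"
proof -
  define a b c d where phases: "a = \<theta> 1 1 t" "b = \<theta> 1 2 t" "c = \<theta> 2 1 t" "d = \<theta> 2 2 t"
  have deriv: "((\<lambda>s. \<theta> \<sigma> k s) has_real_derivative osc_rhs \<omega> (-1) 0 0 \<theta> \<sigma> k t) (at t)"
    if "\<sigma> \<in> {1, 2}" "k \<in> {1, 2}" for \<sigma> k
    using assms that unfolding is_solution_def by blast
  define a' b' c' d' where velocities:
    "a' = \<omega> + (sin (c - a) + sin (d - a)) / 4" "b' = \<omega> + (sin (c - b) + sin (d - b)) / 4"
    "c' = \<omega> + (sin (a - c) + sin (b - c)) / 4" "d' = \<omega> + (sin (a - d) + sin (b - d)) / 4"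
  have "((\<lambda>s. \<theta> 1 1 s) has_real_derivative a') (at t)" "((\<lambda>s. \<theta> 1 2 s) has_real_derivative b') (at t)"
    "((\<lambda>s. \<theta> 2 1 s) has_real_derivative c') (at t)" "((\<lambda>s. \<theta> 2 2 s) has_real_derivative d') (at t)"
    using deriv[of 1 1] deriv[of 1 2] deriv[of 2 1] deriv[of 2 2]
    by (simp_all add: osc_rhs_neighbour_only other_pop_def phases velocities)
  then have "((\<lambda>s. (psi1 \<theta> s + psi3 \<theta> s) / 4) has_real_derivative (a' - b' + c' - d') / 4) (at t)"
    and "((\<lambda>s. (psi1 \<theta> s - psi3 \<theta> s) / 4) has_real_derivative (a' - b' - c' + d') / 4) (at t)"
    unfolding psi1_def psi3_def by (auto intro!: derivative_eq_intros simp: field_simps)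
  moreover have "sin ((psi1 \<theta> t + psi3 \<theta> t) / 2) * ((a' - b' - c' + d') / 4)
      = sin ((psi1 \<theta> t - psi3 \<theta> t) / 2) * ((a' - b' + c' - d') / 4)"
    using sin_neighbour_coupling_identity[of a b c d]
    by (simp add: psi1_def psi3_def phases velocities field_simps)
  ultimately show ?thesis
    using that by blast
qed

lemma H_defined_iff:
  "H_defined p1 p3 \<longleftrightarrow> sin ((p1 + p3) / 4) \<noteq> 0 \<and> cos ((p1 - p3) / 4) \<noteq> 0"
  unfolding H_defined_def sin_zero_iff_int2 cos_zero_iff_int2 by (auto simp: add.commute)

theorem mainTheorem3:
  fixes \<theta> :: "nat \<Rightarrow> nat \<Rightarrow> real \<Rightarrow> real" and \<omega> :: real and I J :: "real set"
  assumes "open I"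
    and "is_solution \<omega> (-1) 0 0 \<theta> I"
    and "J \<subseteq> I" and "is_interval J"
    and "\<forall>t\<in>J. H_defined (psi1 \<theta> t) (psi3 \<theta> t)"
  shows "\<exists>c. \<forall>t\<in>J. H_m1_0 (psi1 \<theta> t) (psi3 \<theta> t) = c"
proof -
  define H where "H = (\<lambda>s. H_m1_0 (psi1 \<theta> s) (psi3 \<theta> s))"
  have "(H has_real_derivative 0) (at t within J)" if tJ: "t \<in> J" for t
  proof -
    obtain u' v' where
      du: "((\<lambda>s. (psi1 \<theta> s + psi3 \<theta> s) / 4) has_real_derivative u') (at t)" and
      dv: "((\<lambda>s. (psi1 \<theta> s - psi3 \<theta> s) / 4) has_real_derivative v') (at t)" and
      relation: "sin ((psi1 \<theta> t + psi3 \<theta> t) / 2) * v' = sin ((psi1 \<theta> t - psi3 \<theta> t) / 2) * u'"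
      using reduced_dynamics_half_angle_relation assms(2,3) tJ by blast
    have double_quarter: "2 * (x / 4) = x / 2" for x :: real
      by simp
    have "sin ((psi1 \<theta> t + psi3 \<theta> t) / 4) \<noteq> 0" "cos ((psi1 \<theta> t - psi3 \<theta> t) / 4) \<noteq> 0"
      using assms(5) tJ H_defined_iff by blast+
    then have "(H has_real_derivative 0) (at t)"
      using has_real_derivative_cot_mult_tan[OF du dv]
      unfolding H_def H_m1_0_def double_quarter relation by simp
    then show ?thesis
      by (rule has_field_derivative_at_within)
  qed
  then obtain c where "\<forall>t\<in>J. H t = c"
    using has_field_derivative_zero_constant[of J H] is_interval_convex[OF assms(4)] by blast
  then show ?thesis
    unfolding H_def by blast
qed

end
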